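(* Let $N=2^n$ and $0\le i<j<N$. Suppose there exists a finite sequence of integers $a_0,a_1,\ldots,a_\ell\in[0,N)$, $\ell\ge0$, with $a_0=i$, $a_\ell=j$, such that for every $m\in[0,\ell)$ one of the following holds: (1) there exist $0\le u<w<n$ with $b_k(a_m)=b_k(a_{m+1})$ for all $k\in[0,n)\setminus\{u,w\}$, $b_u(a_m)=b_w(a_{m+1})=1$ and $b_w(a_m)=b_u(a_{m+1})=0$; or (2) $b_k(a_m)\le b_k(a_{m+1})$ for all $k\in[0,n)$. Then exactly one of the following holds: (a) $\mathrm{w}(\mathbf{g}_j)>\mathrm{w}(\mathbf{g}_i)$, i.e. the first nonzero component of $(S^{(n)}_{j,w})_w$ is at a larger weight than that of $(S^{(n)}_{i,w})_w$; or (b) $\mathrm{w}(\mathbf{g}_j)=\mathrm{w}(\mathbf{g}_i)$ and $s^{(n)}_i>s^{(n)}_j$.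
   Context: All vectors are binary (over $GF(2)$), indices are zero-based. Let $G_N=\begin{pmatrix}1&0\\1&1\end{pmatrix}^{\otimes n}$ for $N=2^n$, with rows $\mathbf{g}_0,\ldots,\mathbf{g}_{N-1}$; $\mathrm{w}(\cdot)$ is Hamming weight. $S^{(n)}_{i,w}$ is the number of words of weight $w$ in $\mathbf{g}_i+\langle\mathbf{g}_{i+1},\ldots,\mathbf{g}_{N-1}\rangle$, and $s^{(n)}_i:=S^{(n)}_{i,\mathrm{w}(\mathbf{g}_i)}$ (the first nonzero entry of $(S^{(n)}_{i,w})_w$). For $i\in[0,N)$, $b_j(i)$ denotes the $j$-th bit of $i$, i.e. $i=\sum_{j=0}^{n-1}b_j(i)2^j$. (The existence of such a sequence is the sufficient condition from the literature for the synthetic channel $W_N^{(i)}$ to be stochastically degraded with respect to $W_N^{(j)}$.) *)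

theory Defs
  imports Main
begin

definition bitn :: "nat \<Rightarrow> nat \<Rightarrow> nat" where
  "bitn j i = (i div 2 ^ j) mod 2"

(* kernel F = [[1,0],[1,1]], entries indexed by (row, column) in {0,1} *)
definition kerF :: "nat \<Rightarrow> nat \<Rightarrow> nat" where
  "kerF a b = (if a = 0 \<and> b = 1 then 0 else 1)"

(* G_N = F^{\<otimes> n}, N = 2^n: entry (i,k) is the product of kernel entries over the bits *)
definition Gmat :: "nat \<Rightarrow> nat \<Rightarrow> nat \<Rightarrow> nat" where
  "Gmat n i k = (\<Prod>j<n. kerF (bitn j i) (bitn j k))"

(* binary vectors of length N = 2^n are functions nat => nat with values in {0,1},
   zero outside [0,N).  Sum over GF(2) of the rows g_t, t in T *)
definition rowsum :: "nat \<Rightarrow> nat set \<Rightarrow> nat \<Rightarrow> nat" where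
  "rowsum n T = (\<lambda>k. if k < 2 ^ n then (\<Sum>t\<in>T. Gmat n t k) mod 2 else 0)"

definition grow :: "nat \<Rightarrow> nat \<Rightarrow> nat \<Rightarrow> nat" where
  "grow n i = rowsum n {i}"

definition hw :: "nat \<Rightarrow> (nat \<Rightarrow> nat) \<Rightarrow> nat" where
  "hw n v = card {k. k < 2 ^ n \<and> v k \<noteq> 0}"

(* the coset g_i + <g_{i+1},...,g_{N-1}> *)
definition coset :: "nat \<Rightarrow> nat \<Rightarrow> (nat \<Rightarrow> nat) set" where
  "coset n i = {rowsum n (insert i T) | T. T \<subseteq> {i<..<2 ^ n}}"

definition S :: "nat \<Rightarrow> nat \<Rightarrow> nat \<Rightarrow> nat" where
  "S n i w = card {v \<in> coset n i. hw n v = w}"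

definition s :: "nat \<Rightarrow> nat \<Rightarrow> nat" where
  "s n i = S n i (hw n (grow n i))"

end

theory Submission
  imports Defs "HOL-Combinatorics.Transposition"
begin

text \<open>Entry (t, k) of G_N is 1 exactly when the bits of k are among those of t, so w(g_t)
counts the submasks of t. A step of type (2) enlarges this set of submasks, strictly unless
a_m = a_(m+1). A step of type (1) exchanges bits u < w, so a_(m+1) = a_m + 2^w - 2^u.
Exchanging the coordinates k and swap(k) is a weight preserving map sending g_t to g_swap(t),
and since swap(t) > a_m whenever t > a_(m+1), it maps the coset of a_(m+1) into that of a_m.
As the rows are linearly independent, it embeds the words of the common minimum weight of the
first coset into those of the second and misses g_a_m + g_a_(m+1), which has that weight too;
so s strictly decreases. Hence (w(g_i), -s_i) increases strictly lexicographically along the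
sequence.\<close>

definition bit_subset :: "nat \<Rightarrow> nat \<Rightarrow> nat \<Rightarrow> bool" where
  "bit_subset n k t \<longleftrightarrow> (\<forall>b<n. bit k b \<longrightarrow> bit t b)"

lemma bit_subset_refl [simp]: "bit_subset n k k"
  by (simp add: bit_subset_def)

lemma bit_subset_trans: "bit_subset n k t \<Longrightarrow> bit_subset n t r \<Longrightarrow> bit_subset n k r"
  by (simp add: bit_subset_def)

lemma bitn_eq_of_bool: "bitn j i = of_bool (bit i j)"
  by (simp add: bitn_def bit_iff_odd odd_iff_mod_2_eq_one even_iff_mod_2_eq_zero)

lemma bitn_eq_1_iff: "bitn j i = 1 \<longleftrightarrow> bit i j"
  by (simp add: bitn_eq_of_bool)

lemma bitn_eq_0_iff: "bitn j i = 0 \<longleftrightarrow> \<not> bit i j"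
  by (simp add: bitn_eq_of_bool)

lemma bitn_eq_bitn_iff: "bitn j x = bitn j y \<longleftrightarrow> (bit x j \<longleftrightarrow> bit y j)"
  by (simp add: bitn_eq_of_bool)

lemma bitn_le_bitn_iff: "bitn j x \<le> bitn j y \<longleftrightarrow> (bit x j \<longrightarrow> bit y j)"
  by (simp add: bitn_eq_of_bool)

lemma Gmat_eq_of_bool: "Gmat n t k = of_bool (bit_subset n k t)"
proof -
  have "kerF (bitn b t) (bitn b k) = of_bool (bit k b \<longrightarrow> bit t b)" for b
    by (simp add: kerF_def bitn_eq_of_bool)
  moreover have "(\<Prod>b<m. of_bool (P b) :: nat) = of_bool (\<forall>b<m. P b)" for m :: nat and P
    by (induction m) (auto simp: less_Suc_eq)
  ultimately show ?thesis
    by (simp add: Gmat_def bit_subset_def)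
qed

lemma bit_imp_less_of_less_power2: "(x::nat) < 2 ^ n \<Longrightarrow> bit x b \<Longrightarrow> b < n"
  by (metis bit_take_bit_iff take_bit_nat_eq_self)

lemma less_power2_of_bits: "(\<And>b. bit (z::nat) b \<Longrightarrow> b < n) \<Longrightarrow> z < 2 ^ n"
  by (metis bit_take_bit_iff bit_eqI take_bit_nat_eq_self_iff)

lemma eq_of_low_bits_eq:
  "(x::nat) < 2 ^ n \<Longrightarrow> y < 2 ^ n \<Longrightarrow> (\<And>b. b < n \<Longrightarrow> bit x b = bit y b) \<Longrightarrow> x = y"
  by (rule bit_eqI) (meson bit_imp_less_of_less_power2)

lemma bit_subset_imp_le:
  assumes "bit_subset n k t" "k < 2 ^ n"
  shows "k \<le> t"
proof -
  have "k = and k t"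
    by (rule bit_eqI) (use assms in \<open>auto simp: bit_and_iff bit_subset_def dest: bit_imp_less_of_less_power2\<close>)
  then have "int k = and (int k) (int t)"
    by (metis of_nat_and_eq)
  also have "\<dots> \<le> int t"
    by simp
  finally show ?thesis
    by simp
qed

lemma flip_bit_flip_bit [simp]: "flip_bit u (flip_bit u k) = (k::nat)"
  by (rule bit_eqI) (auto simp: bit_flip_bit_iff)

lemma flip_bit_less_power2_iff:
  assumes "u < n"
  shows "flip_bit u k < 2 ^ n \<longleftrightarrow> (k::nat) < 2 ^ n"
proof -
  have *: "flip_bit u k < 2 ^ n" if "k < 2 ^ n" for k :: nat
    by (rule less_power2_of_bits)
      (use that assms in \<open>auto simp: bit_flip_bit_iff dest: bit_imp_less_of_less_power2\<close>)
  show ?thesis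
    using *[of k] *[of "flip_bit u k"] by auto
qed

definition swap_bits :: "nat \<Rightarrow> nat \<Rightarrow> nat \<Rightarrow> nat" where
  "swap_bits u w t = (if bit t u = bit t w then t else flip_bit u (flip_bit w t))"

lemma bit_swap_bits: "bit (swap_bits u w t) b = bit t (transpose u w b)"
  by (auto simp: swap_bits_def transpose_def bit_flip_bit_iff)

lemma swap_bits_swap_bits [simp]: "swap_bits u w (swap_bits u w t) = t"
  by (rule bit_eqI) (simp add: bit_swap_bits)

lemma swap_bits_commute: "swap_bits u w = swap_bits w u"
  by (rule ext, rule bit_eqI) (simp add: bit_swap_bits transpose_commute)

lemma inj_swap_bits: "inj (swap_bits u w)"
  by (metis injI swap_bits_swap_bits)

lemma swap_bits_less_power2_iff:
  assumes "u < n" "w < n"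
  shows "swap_bits u w t < 2 ^ n \<longleftrightarrow> t < 2 ^ n"
proof -
  have *: "swap_bits u w t < 2 ^ n" if "t < 2 ^ n" for t
    by (rule less_power2_of_bits)
      (use that assms in \<open>auto simp: bit_swap_bits transpose_def split: if_splits
          dest: bit_imp_less_of_less_power2\<close>)
  show ?thesis
    using *[of t] *[of "swap_bits u w t"] by auto
qed

lemma bit_subset_swap_bits_iff:
  assumes "u < n" "w < n"
  shows "bit_subset n (swap_bits u w k) (swap_bits u w t) \<longleftrightarrow> bit_subset n k t"
proof -
  have "transpose u w ` {..<n} = {..<n}"
    using assms by simp
  then show ?thesis
    unfolding bit_subset_def bit_swap_bits
    by (metis (no_types, lifting) image_eqI lessThan_iff transpose_involutory)
qed

lemma swap_bits_add_power2:
  assumes "bit t u" "\<not> bit t w"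
  shows "swap_bits u w t + 2 ^ u = t + 2 ^ w"
proof -
  have "set_bit u (swap_bits u w t) = set_bit w t"
    by (rule bit_eqI) (use assms in \<open>auto simp: bit_swap_bits transpose_def bit_set_bit_iff\<close>)
  moreover have "\<not> bit (swap_bits u w t) u"
    using assms by (simp add: bit_swap_bits)
  ultimately show ?thesis
    using assms by (simp add: set_bit_eq)
qed

definition permute_coords :: "nat \<Rightarrow> nat \<Rightarrow> nat \<Rightarrow> (nat \<Rightarrow> nat) \<Rightarrow> nat \<Rightarrow> nat" where
  "permute_coords n u w v = (\<lambda>k. if k < 2 ^ n then v (swap_bits u w k) else 0)"

lemma permute_coords_rowsum:
  assumes "u < n" "w < n"
  shows "permute_coords n u w (rowsum n T) = rowsum n (swap_bits u w ` T)"
proof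
  fix k
  have "Gmat n (swap_bits u w t) k = Gmat n t (swap_bits u w k)" for t
    using bit_subset_swap_bits_iff[OF assms, of "swap_bits u w k" t] by (simp add: Gmat_eq_of_bool)
  then have "(\<Sum>t\<in>swap_bits u w ` T. Gmat n t k) = (\<Sum>t\<in>T. Gmat n t (swap_bits u w k))"
    by (simp add: sum.reindex inj_on_subset[OF inj_swap_bits])
  then show "permute_coords n u w (rowsum n T) k = rowsum n (swap_bits u w ` T) k"
    using assms by (simp add: permute_coords_def rowsum_def swap_bits_less_power2_iff)
qed

lemma inj_on_permute_coords_rowsum:
  assumes "u < n" "w < n"
  shows "inj_on (permute_coords n u w) (range (rowsum n))"
proof (rule inj_on_inverseI)
  show "permute_coords n u w (permute_coords n u w v) = v" if "v \<in> range (rowsum n)" for v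
    using that assms by (auto simp: permute_coords_rowsum image_image)
qed

lemma hw_permute_coords:
  assumes "u < n" "w < n"
  shows "hw n (permute_coords n u w v) = hw n v"
proof -
  have "{k. k < 2 ^ n \<and> permute_coords n u w v k \<noteq> 0} = swap_bits u w ` {k. k < 2 ^ n \<and> v k \<noteq> 0}"
  proof (intro set_eqI iffI)
    fix k
    assume "k \<in> {k. k < 2 ^ n \<and> permute_coords n u w v k \<noteq> 0}"
    then have "swap_bits u w k \<in> {k. k < 2 ^ n \<and> v k \<noteq> 0}"
      using assms by (simp add: permute_coords_def swap_bits_less_power2_iff split: if_splits)
    then show "k \<in> swap_bits u w ` {k. k < 2 ^ n \<and> v k \<noteq> 0}"
      by (metis image_eqI swap_bits_swap_bits)
  next
    fix k
    assume "k \<in> swap_bits u w ` {k. k < 2 ^ n \<and> v k \<noteq> 0}"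
    then obtain j where "k = swap_bits u w j" "j < 2 ^ n" "v j \<noteq> 0"
      by blast
    then show "k \<in> {k. k < 2 ^ n \<and> permute_coords n u w v k \<noteq> 0}"
      using assms by (simp add: permute_coords_def swap_bits_less_power2_iff)
  qed
  then show ?thesis
    by (simp add: hw_def card_image inj_on_subset[OF inj_swap_bits])
qed

lemma rowsum_sym_diff:
  assumes "finite A" "finite B"
  shows "rowsum n (sym_diff A B) k = (rowsum n A k + rowsum n B k) mod 2"
proof -
  have "sum f A + sum f B = sum f (sym_diff A B) + 2 * sum f (A \<inter> B)" for f :: "nat \<Rightarrow> nat"
  proof -
    have "sum f (A \<union> B) = sum f (sym_diff A B \<union> (A \<inter> B))"
      by (rule arg_cong[where f = "sum f"]) blast
    also have "\<dots> = sum f (sym_diff A B) + sum f (A \<inter> B)"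
      by (rule sum.union_disjoint) (use assms in auto)
    finally show ?thesis
      using sum.union_inter[OF assms, of f] by simp
  qed
  then show ?thesis
    by (simp add: rowsum_def mod_add_eq)
qed

lemma rowsum_Max:
  assumes "D \<subseteq> {..<2 ^ n}" "D \<noteq> {}"
  shows "rowsum n D (Max D) = 1"
proof -
  have fin: "finite D"
    using assms(1) finite_subset by blast
  have max_in: "Max D \<in> D"
    using fin assms(2) by simp
  then have max_less: "Max D < 2 ^ n"
    using assms(1) by auto
  have "t = Max D" if "t \<in> D" "bit_subset n (Max D) t" for t
    using bit_subset_imp_le[OF that(2) max_less] Max_ge[OF fin that(1)] by simp
  then have "D \<inter> Collect (bit_subset n (Max D)) = {Max D}"
    using max_in by auto
  then show ?thesis
    using fin max_less by (simp add: rowsum_def Gmat_eq_of_bool sum.inter_filter[symmetric])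
qed

lemma inj_on_rowsum: "inj_on (rowsum n) (Pow {..<2 ^ n})"
proof (rule inj_onI, rule ccontr)
  fix A B
  assume A: "A \<in> Pow {..<2 ^ n}" and B: "B \<in> Pow {..<2 ^ n}"
    and eq: "rowsum n A = rowsum n B" and "A \<noteq> B"
  define D where "D = sym_diff A B"
  have fin: "finite A" "finite B"
    using A B finite_subset by auto
  have "rowsum n D k = 0" for k
    using rowsum_sym_diff[OF fin, of n k] eq by (simp add: D_def)
  moreover have "rowsum n D (Max D) = 1"
    using A B \<open>A \<noteq> B\<close> by (intro rowsum_Max) (auto simp: D_def)
  ultimately show False
    by simp
qed

definition row_support :: "nat \<Rightarrow> nat \<Rightarrow> nat set" where
  "row_support n x = {k. k < 2 ^ n \<and> bit_subset n k x}"

lemma finite_row_support [simp]: "finite (row_support n x)"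
  by (simp add: row_support_def)

lemma self_mem_row_support: "x < 2 ^ n \<Longrightarrow> x \<in> row_support n x"
  by (simp add: row_support_def)

lemma row_support_mono: "bit_subset n x y \<Longrightarrow> row_support n x \<subseteq> row_support n y"
  by (auto simp: row_support_def intro: bit_subset_trans)

lemma grow_eq_of_bool: "grow n x k = of_bool (k \<in> row_support n x)"
  by (simp add: grow_def rowsum_def Gmat_eq_of_bool row_support_def del: sum_of_bool_eq)

lemma hw_grow: "hw n (grow n x) = card (row_support n x)"
  by (simp add: hw_def grow_eq_of_bool row_support_def)

lemma hw_rowsum_pair:
  assumes "x \<noteq> y"
  shows "hw n (rowsum n {x, y}) = card (sym_diff (row_support n x) (row_support n y))"
proof -
  have "{k. k < 2 ^ n \<and> rowsum n {x, y} k \<noteq> 0} = sym_diff (row_support n x) (row_support n y)"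
    using assms by (auto simp: rowsum_def Gmat_eq_of_bool row_support_def simp del: sum_of_bool_eq)
  then show ?thesis
    by (simp add: hw_def)
qed

lemma hw_grow_mono: "bit_subset n x y \<Longrightarrow> hw n (grow n x) \<le> hw n (grow n y)"
  by (simp add: hw_grow card_mono row_support_mono)

lemma hw_grow_eq_imp_eq:
  assumes "x < 2 ^ n" "y < 2 ^ n" "bit_subset n x y" "hw n (grow n x) = hw n (grow n y)"
  shows "x = y"
proof -
  have "row_support n x = row_support n y"
    using assms(3,4) by (simp add: hw_grow card_subset_eq row_support_mono)
  then have "y \<in> row_support n x"
    using self_mem_row_support[OF assms(2)] by simp
  then have "bit_subset n y x"
    by (simp add: row_support_def)
  then show ?thesis
    using assms(1-3) by (intro eq_of_low_bits_eq[of x n y]) (auto simp: bit_subset_def)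
qed

lemma card_row_support_bit_eq:
  assumes "u < n" "bit x u"
  shows "card {k \<in> row_support n x. bit k u} = card {k \<in> row_support n x. \<not> bit k u}"
proof -
  have "bit_subset n (flip_bit u k) x \<longleftrightarrow> bit_subset n k x" for k
    using assms(2) by (auto simp: bit_subset_def bit_flip_bit_iff)
  then have flip_mem: "flip_bit u k \<in> row_support n x \<longleftrightarrow> k \<in> row_support n x" for k
    by (simp add: row_support_def flip_bit_less_power2_iff[OF assms(1)])
  have "bij_betw (flip_bit u) {k \<in> row_support n x. \<not> bit k u} {k \<in> row_support n x. bit k u}"
    by (rule bij_betw_byWitness[where f' = "flip_bit u"])
      (auto simp: flip_mem bit_flip_bit_iff)
  then show ?thesis
    by (simp add: bij_betw_same_card)
qed

lemma coset_eq_image: "coset n x = (\<lambda>T. rowsum n (insert x T)) ` Pow {x<..<2 ^ n}"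
  by (auto simp: coset_def)

lemma coset_subset_range: "coset n z \<subseteq> range (rowsum n)"
  unfolding coset_def by blast

text \<open>x and y play the roles of a_m and a_(m+1) in a step of type (1).\<close>

locale bit_exchange =
  fixes n u w x :: nat
  assumes u_less_w: "u < w" and w_less_n: "w < n" and x_less: "x < 2 ^ n"
    and bit_x_u: "bit x u" and not_bit_x_w: "\<not> bit x w"
begin

abbreviation y :: nat where
  "y \<equiv> swap_bits u w x"

lemma u_less_n: "u < n"
  using u_less_w w_less_n by simp

lemma y_less: "y < 2 ^ n"
  using x_less u_less_n w_less_n by (simp add: swap_bits_less_power2_iff)

lemma x_less_y: "x < y"
proof -
  have "(2::nat) ^ u < 2 ^ w"
    using u_less_w by simp
  then show ?thesis
    using swap_bits_add_power2[OF bit_x_u not_bit_x_w] by linarith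
qed

text \<open>Exchanging two unequal bits u, w of t changes t by \<open>\<plusminus>(2\<^sup>w - 2\<^sup>u)\<close>, which is
  exactly the amount separating y from x.\<close>

lemma less_swap_bits_if_less:
  assumes "y < t"
  shows "x < swap_bits u w t"
proof (cases "bit t u = bit t w")
  case True
  then show ?thesis
    using assms x_less_y by (simp add: swap_bits_def)
next
  case False
  have "(2::nat) ^ u < 2 ^ w"
    using u_less_w by simp
  moreover have "swap_bits u w t + 2 ^ u = t + 2 ^ w \<or> swap_bits u w t + 2 ^ w = t + 2 ^ u"
    using False swap_bits_add_power2[of t u w] swap_bits_add_power2[of t w u]
    by (auto simp: swap_bits_commute)
  ultimately show ?thesis
    using assms x_less_y swap_bits_add_power2[OF bit_x_u not_bit_x_w] by linarith
qed

lemma row_support_y: "row_support n y = swap_bits u w ` row_support n x"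
proof -
  have "k \<in> row_support n y \<longleftrightarrow> swap_bits u w k \<in> row_support n x" for k
    using bit_subset_swap_bits_iff[OF u_less_n w_less_n, of k y]
    by (simp add: row_support_def swap_bits_less_power2_iff[OF u_less_n w_less_n])
  then show ?thesis
    by (metis (no_types, lifting) image_iff subset_antisym subsetI swap_bits_swap_bits)
qed

lemma mem_row_support_y_iff:
  assumes "k \<in> row_support n x"
  shows "k \<in> row_support n y \<longleftrightarrow> \<not> bit k u"
proof -
  have "bit y b \<longleftrightarrow> (if b = u then False else if b = w then True else bit x b)" for b
    using bit_x_u not_bit_x_w by (simp add: bit_swap_bits transpose_def)
  then show ?thesis
    using assms u_less_n by (auto simp: row_support_def bit_subset_def)
qed

lemma hw_grow_y: "hw n (grow n y) = hw n (grow n x)"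
  by (simp add: hw_grow row_support_y card_image inj_on_subset[OF inj_swap_bits])

lemma hw_rowsum_x_y: "hw n (rowsum n {x, y}) = hw n (grow n x)"
proof -
  let ?X = "row_support n x" and ?Y = "row_support n y"
  have "?X - ?Y = {k \<in> ?X. bit k u}" "?X \<inter> ?Y = {k \<in> ?X. \<not> bit k u}"
    using mem_row_support_y_iff by auto
  then have XY: "card (?X - ?Y) = card (?X \<inter> ?Y)"
    using card_row_support_bit_eq[OF u_less_n bit_x_u] by simp
  have "swap_bits u w ` (?X - ?Y) = ?Y - ?X"
    by (simp add: row_support_y image_set_diff[OF inj_swap_bits] image_image)
  then have YX: "card (?Y - ?X) = card (?X - ?Y)"
    by (metis card_image inj_on_subset[OF inj_swap_bits] subset_UNIV)
  have "card (sym_diff ?X ?Y) = card (?X - ?Y) + card (?Y - ?X)"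
    by (rule card_Un_disjoint) auto
  also have "\<dots> = card ?X"
    using XY YX card_Int_Diff[of ?X ?Y] by simp
  finally show ?thesis
    using x_less_y by (simp add: hw_rowsum_pair hw_grow)
qed

lemma permute_coords_coset_y:
  "permute_coords n u w ` coset n y \<subseteq> {rowsum n (insert x T) | T. T \<subseteq> {x<..<2 ^ n} \<and> y \<notin> T}"
proof
  fix v
  assume "v \<in> permute_coords n u w ` coset n y"
  then obtain T where T: "T \<subseteq> {y<..<2 ^ n}" and v: "v = permute_coords n u w (rowsum n (insert y T))"
    unfolding coset_def by blast
  have "v = rowsum n (insert x (swap_bits u w ` T))"
    using v u_less_n w_less_n by (simp add: permute_coords_rowsum)
  moreover have "swap_bits u w ` T \<subseteq> {x<..<2 ^ n}"
    using T less_swap_bits_if_less u_less_n w_less_n by (auto simp: swap_bits_less_power2_iff)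
  moreover have "y \<notin> swap_bits u w ` T"
    using T x_less_y by (auto simp: inj_eq[OF inj_swap_bits])
  ultimately show "v \<in> {rowsum n (insert x T) | T. T \<subseteq> {x<..<2 ^ n} \<and> y \<notin> T}"
    by blast
qed

lemma permute_coords_coset: "permute_coords n u w ` coset n y \<subseteq> coset n x"
  using permute_coords_coset_y unfolding coset_def by blast

lemma rowsum_x_y_mem_coset: "rowsum n {x, y} \<in> coset n x"
proof -
  have "{y} \<subseteq> {x<..<2 ^ n}"
    using x_less_y y_less by simp
  then show ?thesis
    unfolding coset_def by blast
qed

lemma rowsum_x_y_not_mem_permute_coords_coset:
  "rowsum n {x, y} \<notin> permute_coords n u w ` coset n y"
proof
  assume "rowsum n {x, y} \<in> permute_coords n u w ` coset n y"
  then obtain T where T: "T \<subseteq> {x<..<2 ^ n}" "y \<notin> T" and eq: "rowsum n {x, y} = rowsum n (insert x T)"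
    using permute_coords_coset_y by blast
  have "T \<subseteq> {..<2 ^ n}"
    using T(1) by auto
  then have "{x, y} = insert x T"
    using inj_onD[OF inj_on_rowsum eq] x_less y_less by simp
  then show False
    using T(2) x_less_y by (metis insertE insertI1 insertI2 less_irrefl)
qed

lemma s_y_less: "s n y < s n x"
proof -
  define B where "B z = {v \<in> coset n z. hw n v = hw n (grow n x)}" for z
  have "permute_coords n u w ` B y \<subseteq> B x"
  proof
    fix v
    assume "v \<in> permute_coords n u w ` B y"
    then obtain c where c: "c \<in> coset n y" "hw n c = hw n (grow n x)" and v: "v = permute_coords n u w c"
      unfolding B_def by blast
    have "v \<in> coset n x"
      using permute_coords_coset c(1) v by blast
    moreover have "hw n v = hw n (grow n x)"
      using c(2) v hw_permute_coords[OF u_less_n w_less_n] by simp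
    ultimately show "v \<in> B x"
      by (simp add: B_def)
  qed
  moreover have "rowsum n {x, y} \<in> B x"
    using rowsum_x_y_mem_coset hw_rowsum_x_y by (simp add: B_def)
  moreover have "rowsum n {x, y} \<notin> permute_coords n u w ` B y"
    using rowsum_x_y_not_mem_permute_coords_coset by (auto simp: B_def)
  ultimately have "permute_coords n u w ` B y \<subset> B x"
    by blast
  moreover have "inj_on (permute_coords n u w) (B y)"
    using inj_on_permute_coords_rowsum[OF u_less_n w_less_n]
    by (rule inj_on_subset) (use coset_subset_range in \<open>force simp: B_def\<close>)
  moreover have "finite (B x)"
    by (simp add: B_def coset_eq_image)
  ultimately have "card (B y) < card (B x)"
    by (metis card_image psubset_card_mono)
  then show ?thesis
    by (simp add: s_def S_def B_def hw_grow_y)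
qed

end

definition spectrum_less :: "nat \<Rightarrow> nat \<Rightarrow> nat \<Rightarrow> bool" where
  "spectrum_less n x y \<longleftrightarrow> hw n (grow n x) < hw n (grow n y)
     \<or> hw n (grow n x) = hw n (grow n y) \<and> s n y < s n x"

lemma transp_spectrum_less: "transp (spectrum_less n)"
  by (rule transpI) (auto simp: spectrum_less_def)

lemma step_eq_or_spectrum_less:
  assumes p: "p < 2 ^ n" and q: "q < 2 ^ n"
    and step: "(\<exists>u w. u < w \<and> w < n
                \<and> (\<forall>k<n. k \<noteq> u \<and> k \<noteq> w \<longrightarrow> bitn k p = bitn k q)
                \<and> bitn u p = 1 \<and> bitn w q = 1 \<and> bitn w p = 0 \<and> bitn u q = 0)
             \<or> (\<forall>k<n. bitn k p \<le> bitn k q)"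
  shows "p = q \<or> spectrum_less n p q"
  using step
proof (elim disjE exE conjE)
  fix u w
  assume uw: "u < w" "w < n" and same: "\<forall>k<n. k \<noteq> u \<and> k \<noteq> w \<longrightarrow> bitn k p = bitn k q"
    and bits: "bitn u p = 1" "bitn w q = 1" "bitn w p = 0" "bitn u q = 0"
  have bit_uw: "bit p u" "bit q w" "\<not> bit p w" "\<not> bit q u"
    using bits unfolding bitn_eq_1_iff bitn_eq_0_iff by simp_all
  interpret bit_exchange n u w p
    using uw p bit_uw by unfold_locales
  have "q = swap_bits u w p"
  proof (rule eq_of_low_bits_eq[OF q y_less])
    show "bit q b = bit (swap_bits u w p) b" if "b < n" for b
      using that same bit_uw by (cases "b = u \<or> b = w") (auto simp: bit_swap_bits bitn_eq_bitn_iff)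
  qed
  then show ?thesis
    using hw_grow_y s_y_less by (simp add: spectrum_less_def)
next
  assume "\<forall>k<n. bitn k p \<le> bitn k q"
  then have "bit_subset n p q"
    by (simp add: bit_subset_def bitn_le_bitn_iff)
  then show ?thesis
    using hw_grow_mono hw_grow_eq_imp_eq p q by (fastforce simp: spectrum_less_def)
qed

lemma chain_eq_or_trans:
  assumes "transp R" and "\<And>m. m < l \<Longrightarrow> a m = a (Suc m) \<or> R (a m) (a (Suc m))"
  shows "a 0 = a l \<or> R (a 0) (a l)"
  using assms(2)
proof (induction l)
  case (Suc l)
  then have "a 0 = a l \<or> R (a 0) (a l)" and "a l = a (Suc l) \<or> R (a l) (a (Suc l))"
    by simp_all
  then show ?case
    using \<open>transp R\<close> by (metis transpD)
qed simp

theorem theorem4: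
  fixes n i j l :: nat and a :: "nat \<Rightarrow> nat"
  assumes "i < j" and "j < 2 ^ n"
    and "\<forall>m\<le>l. a m < 2 ^ n"
    and "a 0 = i" and "a l = j"
    and "\<forall>m<l.
           (\<exists>u w. u < w \<and> w < n
              \<and> (\<forall>k<n. k \<noteq> u \<and> k \<noteq> w \<longrightarrow> bitn k (a m) = bitn k (a (Suc m)))
              \<and> bitn u (a m) = 1 \<and> bitn w (a (Suc m)) = 1
              \<and> bitn w (a m) = 0 \<and> bitn u (a (Suc m)) = 0)
         \<or> (\<forall>k<n. bitn k (a m) \<le> bitn k (a (Suc m)))"
  shows "(hw n (grow n j) > hw n (grow n i)
          \<and> \<not> (hw n (grow n j) = hw n (grow n i) \<and> s n i > s n j))
       \<or> (\<not> (hw n (grow n j) > hw n (grow n i))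
          \<and> (hw n (grow n j) = hw n (grow n i) \<and> s n i > s n j))"
proof -
  have "a m = a (Suc m) \<or> spectrum_less n (a m) (a (Suc m))" if "m < l" for m
    using that assms(3,6) by (intro step_eq_or_spectrum_less) auto
  then have "a 0 = a l \<or> spectrum_less n (a 0) (a l)"
    by (rule chain_eq_or_trans[OF transp_spectrum_less])
  then have "spectrum_less n i j"
    using assms(1,4,5) by simp
  then show ?thesis
    by (auto simp: spectrum_less_def)
qed

end
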